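(* For every integer $n \geq 1$, $\psi_{2}(2,n) = \chi(n)$, where $\psi_2(2,n)$ is the number of primitive two-dimensional words of dimension $2\times n$ over the binary alphabet $\{0,1\}$ and $\chi(n)=|\mathcal{T}_n|$ is the number of (similarity classes of) triangles having exact pedal period $n$.
   Context: A two-dimensional word of dimension $m\times n$ over an alphabet $\Sigma$ is a map $W:\{0,\dots,m-1\}\times\{0,\dots,n-1\}\to\Sigma$. For $W$ of dimension $m\times n$ and integers $p,q\ge1$, the power $W^{p\times q}$ is the word of dimension $pm\times qn$ with $W^{p\times q}[i,j]=W[i \bmod m, j\bmod n]$. A two-dimensional word is periodic if it equals $V^{p\times q}$ for some nonempty two-dimensional word $V$ with $p\ge2$ or $q\ge2$; otherwise it is primitive. $\psi_2(m,n)$ denotes the number of primitive two-dimensional words of dimension $m\times n$ over $\{0,1\}$. Triangles are represented up to similarity by sorted normalized angle triples: $\overline{C}=\{(a,b,c)\in\mathbb{R}^3 : a\ge b\ge c\ge 0,\ a+b+c=1\}$, $C=\{(a,b,c)\in\mathbb{R}^3: a\ge b\ge c>0,\ a+b+c=1\}$ (angles $a\pi,b\pi,c\pi$), and $C^*=\{(a,b,c)\in C: a\neq 1/2\}$. Partition $C^*$ into $R_0=\{a<1/2\}$, $R_1=\{2a-1\ge 2b,\ a>1/2\}$, $R_2=\{2b>2a-1\ge 2c,\ a>1/2\}$, $R_3=\{2c>2a-1,\ a>1/2\}$ (all within $C^*$). The sorted pedal map $P:C^*\to C$ is $P(a,b,c)=(1-2c,1-2b,1-2a)$ on $R_0$,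 $(2a-1,2b,2c)$ on $R_1$, $(2b,2a-1,2c)$ on $R_2$, $(2b,2c,2a-1)$ on $R_3$ (this is the angle map sending a triangle to its pedal/orthic triangle, followed by sorting). For $n\ge1$, $\mathcal{T}_n=\{p\in C : P^j(p)\text{ is defined for all }0\le j<n,\ P^n(p)=p,\ P^d(p)\ne p \text{ for all }1\le d<n\}$, the set of triangles of exact pedal period $n$, and $\chi(n)=|\mathcal{T}_n|$. *)

theory Defs
  imports Complex_Main
begin

text \<open>A two-dimensional word of dimension m x n over alphabet S is represented as an
extensional map on {0..<m} x {0..<n} (value undefined outside the domain).\<close>

definition words2 :: "nat \<Rightarrow> nat \<Rightarrow> 'a set \<Rightarrow> (nat \<times> nat \<Rightarrow> 'a) set" where
  "words2 m n S = {W. (\<forall>i j. i < m \<and> j < n \<longrightarrow> W (i, j) \<in> S) \<and>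
                      (\<forall>i j. \<not> (i < m \<and> j < n) \<longrightarrow> W (i, j) = undefined)}"

definition power2 :: "(nat \<times> nat \<Rightarrow> 'a) \<Rightarrow> nat \<Rightarrow> nat \<Rightarrow> nat \<Rightarrow> nat \<Rightarrow> (nat \<times> nat \<Rightarrow> 'a)" where
  "power2 V a b p q = (\<lambda>(i, j). if i < p * a \<and> j < q * b then V (i mod a, j mod b) else undefined)"

definition periodic2 :: "nat \<Rightarrow> nat \<Rightarrow> 'a set \<Rightarrow> (nat \<times> nat \<Rightarrow> 'a) \<Rightarrow> bool" where
  "periodic2 m n S W \<longleftrightarrow> (\<exists>a b p q V. a \<ge> 1 \<and> b \<ge> 1 \<and> p \<ge> 1 \<and> q \<ge> 1 \<and> (p \<ge> 2 \<or> q \<ge> 2) \<and>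
       p * a = m \<and> q * b = n \<and> V \<in> words2 a b S \<and> W = power2 V a b p q)"

definition psi2 :: "nat \<Rightarrow> nat \<Rightarrow> nat" where
  "psi2 m n = card {W \<in> words2 m n {0::nat, 1}. \<not> periodic2 m n {0, 1} W}"

definition Ctri :: "(real \<times> real \<times> real) set" where
  "Ctri = {(a, b, c). a \<ge> b \<and> b \<ge> c \<and> c > 0 \<and> a + b + c = 1}"

definition Cstar :: "(real \<times> real \<times> real) set" where
  "Cstar = {(a, b, c). (a, b, c) \<in> Ctri \<and> a \<noteq> 1/2}"

text \<open>Sorted pedal map; only meaningful on Cstar (the region conditions follow the paper).\<close>
definition pedal :: "real \<times> real \<times> real \<Rightarrow> real \<times> real \<times> real" where
  "pedal = (\<lambda>(a, b, c).
     if a < 1/2 then (1 - 2*c, 1 - 2*b, 1 - 2*a)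
     else if 2*a - 1 \<ge> 2*b then (2*a - 1, 2*b, 2*c)
     else if 2*a - 1 \<ge> 2*c then (2*b, 2*a - 1, 2*c)
     else (2*b, 2*c, 2*a - 1))"

definition Tper :: "nat \<Rightarrow> (real \<times> real \<times> real) set" where
  "Tper n = {p \<in> Ctri. (\<forall>j < n. (pedal ^^ j) p \<in> Cstar) \<and> (pedal ^^ n) p = p \<and>
                       (\<forall>d. 1 \<le> d \<and> d < n \<longrightarrow> (pedal ^^ d) p \<noteq> p)}"

definition chi :: "nat \<Rightarrow> nat" where
  "chi n = card (Tper n)"

end

theory Submission
  imports Defs "HOL-Analysis.Brouwer_Fixpoint"
begin

text \<open>
  On each region \<open>R\<^sub>r\<close> the pedal map is affine and doubles the taxicab distance, so two
  n-periodic triangles that visit the regions in the same order (the same itinerary) coincide.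
  Conversely, every n-periodic itinerary that visits \<open>R\<^sub>0\<close> or \<open>R\<^sub>3\<close> is realised: the n
  corresponding inverse branches compose to a continuous self-map of the compact convex set
  \<open>Cbar\<close>, and its Brouwer fixed point has the prescribed itinerary, because a degenerate or
  isosceles point on the boundary of a region would propagate along the periodic orbit and force
  the itinerary to be constantly 1 or constantly 0. Itineraries inside \<open>R\<^sub>1 \<union> R\<^sub>2\<close> are
  impossible, since there the smallest angle doubles. Writing each region as a column of two
  bits, with the constant columns reserved for \<open>R\<^sub>1\<close> and \<open>R\<^sub>2\<close>, the triangles of exact period n
  therefore correspond to the 2 x n binary words whose rows differ and whose columns have no
  proper period, which are exactly the primitive words.
\<close>

section \<open>Periodic sequences\<close>

lemma periodic_add_mult:
  fixes s :: "nat \<Rightarrow> 'a"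
  assumes "\<And>k. s (k + n) = s k"
  shows "s (k + m * n) = s k"
proof (induction m)
  case (Suc m)
  have "s (k + Suc m * n) = s (k + m * n + n)" by (simp add: algebra_simps)
  with Suc assms show ?case by simp
qed simp

lemma periodic_mod:
  fixes s :: "nat \<Rightarrow> 'a"
  assumes "\<And>k. s (k + n) = s k"
  shows "s k = s (k mod n)"
  using periodic_add_mult[of s n "k mod n" "k div n", OF assms] by simp

lemma periodic_gcd:
  fixes s :: "nat \<Rightarrow> 'a"
  assumes d: "\<And>k. s (k + d) = s k" and n: "\<And>k. s (k + n) = s k"
  shows "s (k + gcd d n) = s k"
proof (cases "d = 0")
  case False
  then obtain x y where xy: "d * x = n * y + gcd d n" using bezout_nat by blast
  have "s (k + gcd d n) = s (k + gcd d n + y * n)" by (rule periodic_add_mult[symmetric], rule n)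
  also have "k + gcd d n + y * n = k + x * d" using xy by (simp add: algebra_simps)
  also have "s (k + x * d) = s k" by (rule periodic_add_mult, rule d)
  finally show ?thesis .
qed (simp add: n)

lemma periodic_forward_invariant:
  assumes "n \<ge> 1" "\<And>k. Q (k + n) = Q k" "\<And>k. Q k \<Longrightarrow> Q (Suc k)" "Q j"
  shows "Q k"
proof -
  have "j \<le> k + j * n" using \<open>n \<ge> 1\<close> by (simp add: trans_le_add2)
  then have "Q (k + j * n)"
    by (induction rule: dec_induct) (use assms(3,4) in auto)
  then show ?thesis using periodic_add_mult[of Q n k j] assms(2) by simp
qed

lemma periodic_divisor:
  fixes t :: "nat \<Rightarrow> 'a"
  assumes "b dvd n" "n \<ge> 1" "\<And>k. t (k + n) = t k" "\<And>j. j < n \<Longrightarrow> t j = t (j mod b)"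
  shows "t (k + b) = t k"
proof -
  have "t (k + b) = t ((k + b) mod n)" by (rule periodic_mod, rule assms(3))
  also have "\<dots> = t ((k + b) mod n mod b)" using \<open>n \<ge> 1\<close> by (intro assms(4)) simp
  also have "(k + b) mod n mod b = k mod n mod b" using \<open>b dvd n\<close> by (simp add: mod_mod_cancel)
  also have "t (k mod n mod b) = t (k mod n)" using \<open>n \<ge> 1\<close> by (intro assms(4)[symmetric]) simp
  also have "\<dots> = t k" by (rule periodic_mod[symmetric], rule assms(3))
  finally show ?thesis .
qed

lemma funpow_periodic_point:
  assumes "(f ^^ n) x = x"
  shows "(f ^^ n) ((f ^^ m) x) = (f ^^ m) x"
proof -
  have "(f ^^ n) ((f ^^ m) x) = (f ^^ (n + m)) x" by (simp add: funpow_add)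
  also have "\<dots> = (f ^^ (m + n)) x" by (simp only: add.commute)
  also have "\<dots> = (f ^^ m) x" using assms by (simp add: funpow_add)
  finally show ?thesis .
qed

section \<open>The pedal map on its regions\<close>

definition Cbar :: "(real \<times> real \<times> real) set" where
  "Cbar = {(a, b, c). a \<ge> b \<and> b \<ge> c \<and> c \<ge> 0 \<and> a + b + c = 1}"

lemma Cbar_iff [simp]: "(a, b, c) \<in> Cbar \<longleftrightarrow> a \<ge> b \<and> b \<ge> c \<and> c \<ge> 0 \<and> a + b + c = 1"
  by (simp add: Cbar_def)

lemma Ctri_iff [simp]: "(a, b, c) \<in> Ctri \<longleftrightarrow> a \<ge> b \<and> b \<ge> c \<and> c > 0 \<and> a + b + c = 1"
  by (simp add: Ctri_def)

lemma Cstar_iff [simp]: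
  "(a, b, c) \<in> Cstar \<longleftrightarrow> a \<ge> b \<and> b \<ge> c \<and> c > 0 \<and> a + b + c = 1 \<and> a \<noteq> 1/2"
  by (simp add: Cstar_def)

definition pedal_region :: "real \<times> real \<times> real \<Rightarrow> nat" where
  "pedal_region = (\<lambda>(a, b, c). if a < 1/2 then 0 else if 2*a - 1 \<ge> 2*b then 1
     else if 2*a - 1 \<ge> 2*c then 2 else 3)"

definition pedal_branch :: "nat \<Rightarrow> real \<times> real \<times> real \<Rightarrow> real \<times> real \<times> real" where
  "pedal_branch r = (\<lambda>(a, b, c).
     if r = 0 then ((1 - c)/2, (1 - b)/2, (1 - a)/2)
     else if r = 1 then ((1 + a)/2, b/2, c/2)
     else if r = 2 then ((1 + b)/2, a/2, c/2)
     else ((1 + c)/2, a/2, b/2))"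

lemma pedal_region_less_4: "pedal_region x < 4"
  by (cases x) (simp add: pedal_region_def)

lemma pedal_branch_Cbar: "y \<in> Cbar \<Longrightarrow> pedal_branch r y \<in> Cbar"
  by (cases y) (auto simp: pedal_branch_def field_simps)

lemma pedal_branch_inverse:
  assumes "(a, b, c) \<in> Cbar" "c > 0" "r < 4" "r = 2 \<longrightarrow> a > b" "r = 3 \<longrightarrow> b > c"
  shows "pedal_branch r (a, b, c) \<in> Cstar \<and> pedal_region (pedal_branch r (a, b, c)) = r
    \<and> pedal (pedal_branch r (a, b, c)) = (a, b, c)"
proof -
  have "r = 0 \<or> r = 1 \<or> r = 2 \<or> r = 3" using \<open>r < 4\<close> by auto
  then show ?thesis using assms(1,2,4,5)
    by (elim disjE) (auto simp: pedal_branch_def pedal_region_def pedal_def field_simps)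
qed

definition taxicab_dist :: "real \<times> real \<times> real \<Rightarrow> real \<times> real \<times> real \<Rightarrow> real" where
  "taxicab_dist = (\<lambda>(a, b, c) (a', b', c'). \<bar>a - a'\<bar> + \<bar>b - b'\<bar> + \<bar>c - c'\<bar>)"

lemma taxicab_dist_pedal:
  assumes "pedal_region x = pedal_region y"
  shows "taxicab_dist (pedal x) (pedal y) = 2 * taxicab_dist x y"
proof -
  have abs_double: "abs (2 * x - 2 * y) = 2 * abs (x - y)" for x y :: real
    by (simp add: abs_if)
  show ?thesis using assms
    by (cases x; cases y)
      (auto simp: pedal_region_def pedal_def taxicab_dist_def abs_double abs_minus_commute
        split: if_splits)
qed

lemma taxicab_dist_eq_0D: "taxicab_dist x y = 0 \<Longrightarrow> x = y"
  by (cases x; cases y) (auto simp: taxicab_dist_def)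

definition itinerary :: "real \<times> real \<times> real \<Rightarrow> nat \<Rightarrow> nat" where
  "itinerary p k = pedal_region ((pedal ^^ k) p)"

lemma itinerary_funpow: "itinerary ((pedal ^^ d) p) k = itinerary p (k + d)"
  by (simp add: itinerary_def funpow_add)

lemma itinerary_periodic: "(pedal ^^ d) p = p \<Longrightarrow> itinerary p (k + d) = itinerary p k"
  by (metis itinerary_funpow)

lemma taxicab_dist_funpow_pedal:
  assumes "\<forall>k<m. itinerary x k = itinerary y k"
  shows "taxicab_dist ((pedal ^^ m) x) ((pedal ^^ m) y) = 2 ^ m * taxicab_dist x y"
  using assms
proof (induction m)
  case (Suc m)
  then have "pedal_region ((pedal ^^ m) x) = pedal_region ((pedal ^^ m) y)"
    by (simp add: itinerary_def)
  with Suc show ?case by (simp add: taxicab_dist_pedal)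
qed simp

lemma periodic_points_eqI:
  assumes "n \<ge> 1" "(pedal ^^ n) x = x" "(pedal ^^ n) y = y" "\<forall>k<n. itinerary x k = itinerary y k"
  shows "x = y"
proof -
  have "taxicab_dist x y = 2 ^ n * taxicab_dist x y"
    using taxicab_dist_funpow_pedal[OF assms(4)] assms(2,3) by simp
  moreover have "(2::real) ^ n > 1" using \<open>n \<ge> 1\<close> by (intro one_less_power) auto
  ultimately have "taxicab_dist x y = 0" by (metis mult_cancel_right1 less_irrefl)
  then show ?thesis by (rule taxicab_dist_eq_0D)
qed

lemma smallest_angle_pedal:
  "pedal_region x \<in> {1, 2} \<Longrightarrow> snd (snd (pedal x)) = 2 * snd (snd x)"
  by (cases x) (auto simp: pedal_region_def pedal_def split: if_splits)

lemma no_periodic_orbit_in_regions_1_2: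
  assumes "n \<ge> 1" "p \<in> Ctri" "(pedal ^^ n) p = p" "\<forall>j<n. itinerary p j \<in> {1, 2}"
  shows False
proof -
  have "snd (snd ((pedal ^^ m) p)) = 2 ^ m * snd (snd p)" if "m \<le> n" for m
    using that
  proof (induction m)
    case (Suc m)
    then show ?case using smallest_angle_pedal assms(4) by (simp add: itinerary_def)
  qed simp
  from this[of n] have "snd (snd p) = 2 ^ n * snd (snd p)" using assms(3) by simp
  moreover have "snd (snd p) > 0" using assms(2) by (cases p) simp
  moreover have "(2::real) ^ n > 1" using \<open>n \<ge> 1\<close> by (intro one_less_power) auto
  ultimately show False by simp
qed

definition degenerate :: "real \<times> real \<times> real \<Rightarrow> bool" where
  "degenerate = (\<lambda>(a, b, c). c = 0)"

definition isosceles :: "real \<times> real \<times> real \<Rightarrow> bool" where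
  "isosceles = (\<lambda>(a, b, c). a = b \<or> b = c)"

definition equilateral :: "real \<times> real \<times> real \<Rightarrow> bool" where
  "equilateral = (\<lambda>(a, b, c). a = b \<and> b = c)"

lemma degenerate_pedal_branchD:
  "y \<in> Cbar \<Longrightarrow> degenerate (pedal_branch r y) \<Longrightarrow> degenerate y"
  by (cases y) (auto simp: degenerate_def pedal_branch_def split: if_splits)

lemma degenerate_pedal_branch_0_3:
  "y \<in> Cbar \<Longrightarrow> degenerate (pedal_branch r y) \<Longrightarrow> r = 0 \<or> r = 3 \<Longrightarrow> y = (1, 0, 0)"
  by (cases y) (auto simp: degenerate_def pedal_branch_def)

lemma pedal_branch_eq_vertex:
  "y \<in> Cbar \<Longrightarrow> r < 4 \<Longrightarrow> pedal_branch r y = (1, 0, 0) \<Longrightarrow> r = 1 \<and> y = (1, 0, 0)"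
  by (cases y) (auto simp: pedal_branch_def split: if_splits)

lemma isosceles_pedal_branchD:
  "y \<in> Cbar \<Longrightarrow> isosceles (pedal_branch r y) \<Longrightarrow> isosceles y"
  by (cases y) (auto simp: isosceles_def pedal_branch_def split: if_splits)

lemma equilateral_pedal_branchD:
  "y \<in> Cbar \<Longrightarrow> \<not> degenerate y \<Longrightarrow> r < 4 \<Longrightarrow> equilateral (pedal_branch r y)
    \<Longrightarrow> r = 0 \<and> equilateral y"
  by (cases y) (auto simp: degenerate_def equilateral_def pedal_branch_def split: if_splits)

lemma equilateral_if_isosceles_pedal_branch:
  "(a, b, c) \<in> Cbar \<Longrightarrow> c > 0 \<Longrightarrow> isosceles (pedal_branch r (a, b, c))
    \<Longrightarrow> r = 2 \<or> (r = 3 \<and> b = c) \<Longrightarrow> equilateral (a, b, c)"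
  by (auto simp: isosceles_def equilateral_def pedal_branch_def)

section \<open>Realising itineraries\<close>

locale periodic_backward_orbit =
  fixes n :: nat and s :: "nat \<Rightarrow> nat" and q :: "nat \<Rightarrow> real \<times> real \<times> real"
  assumes period_pos: "n \<ge> 1"
    and s_less_4: "s k < 4"
    and q_periodic: "q (k + n) = q k"
    and q_Cbar: "q k \<in> Cbar"
    and q_pedal_branch: "q k = pedal_branch (s k) (q (Suc k))"
    and visits_0_or_3: "\<exists>j. s j = 0 \<or> s j = 3"
begin

lemma invariant_everywhere:
  assumes "\<And>k. P (q k) \<Longrightarrow> P (q (Suc k))" "P (q j)"
  shows "P (q k)"
  by (rule periodic_forward_invariant[of n "\<lambda>k. P (q k)"])
    (use assms period_pos q_periodic in auto)

lemma not_degenerate: "\<not> degenerate (q k)"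
proof
  assume "degenerate (q k)"
  then have all_degenerate: "degenerate (q i)" for i
    by (rule invariant_everywhere[of degenerate, rotated])
      (metis degenerate_pedal_branchD q_Cbar q_pedal_branch)
  obtain j where j: "s j = 0 \<or> s j = 3" using visits_0_or_3 by blast
  then have "q (Suc j) = (1, 0, 0)"
    using degenerate_pedal_branch_0_3 q_Cbar all_degenerate[of j] q_pedal_branch[of j] by metis
  then have "q i = (1, 0, 0)" for i
    by (rule invariant_everywhere[of "\<lambda>x. x = (1, 0, 0)", rotated])
      (metis pedal_branch_eq_vertex q_Cbar q_pedal_branch s_less_4)
  then have "s j = 1"
    using pedal_branch_eq_vertex q_Cbar q_pedal_branch s_less_4 by metis
  with j show False by simp
qed

lemma strict_in_regions_2_3:
  assumes "q (Suc k) = (a, b, c)"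
  shows "(s k = 2 \<longrightarrow> a > b) \<and> (s k = 3 \<longrightarrow> b > c)"
proof (rule ccontr)
  assume "\<not> ?thesis"
  then have cases: "(s k = 2 \<and> a = b) \<or> (s k = 3 \<and> b = c)"
    using q_Cbar[of "Suc k"] assms by auto
  then have "isosceles (q (Suc k))" using assms by (auto simp: isosceles_def)
  then have "isosceles (q i)" for i
    by (rule invariant_everywhere[of isosceles, rotated])
      (metis isosceles_pedal_branchD q_Cbar q_pedal_branch)
  then have "equilateral (q (Suc k))"
    using equilateral_if_isosceles_pedal_branch[of a b c "s k"] cases assms \<open>isosceles (q k)\<close>
      q_Cbar[of "Suc k"] not_degenerate[of "Suc k"] q_pedal_branch[of k]
    by (auto simp: degenerate_def)
  then have "equilateral (q i)" for i
    by (rule invariant_everywhere[of equilateral, rotated])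
      (metis equilateral_pedal_branchD not_degenerate q_Cbar q_pedal_branch s_less_4)
  then have "s k = 0"
    using equilateral_pedal_branchD not_degenerate q_Cbar q_pedal_branch s_less_4 by metis
  with cases show False by simp
qed

lemma orbit: "q k \<in> Cstar \<and> pedal_region (q k) = s k \<and> pedal (q k) = q (Suc k)"
proof -
  obtain a b c where abc: "q (Suc k) = (a, b, c)" by (cases "q (Suc k)")
  have "c > 0" using not_degenerate[of "Suc k"] q_Cbar[of "Suc k"] abc
    by (auto simp: degenerate_def)
  then show ?thesis
    using pedal_branch_inverse[of a b c "s k"] q_Cbar[of "Suc k"] s_less_4[of k]
      strict_in_regions_2_3[OF abc] q_pedal_branch[of k] abc
    by simp
qed

end

fun branch_chain :: "(nat \<Rightarrow> nat) \<Rightarrow> nat \<Rightarrow> nat \<Rightarrow> real \<times> real \<times> real \<Rightarrow> real \<times> real \<times> real" where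
  "branch_chain s 0 k = id"
| "branch_chain s (Suc m) k = pedal_branch (s k) \<circ> branch_chain s m (Suc k)"

lemma continuous_on_pedal_branch: "continuous_on S (pedal_branch r)"
  unfolding pedal_branch_def case_prod_unfold
  by (cases "r = 0"; cases "r = 1"; cases "r = 2") (simp_all add: continuous_intros)

lemma continuous_on_branch_chain: "continuous_on S (branch_chain s m k)"
proof (induction m arbitrary: k)
  case (Suc m)
  show ?case
    unfolding branch_chain.simps comp_def
    by (rule continuous_on_compose2[OF continuous_on_pedal_branch Suc.IH subset_UNIV])
qed (simp add: continuous_on_id)

lemma branch_chain_Cbar: "x \<in> Cbar \<Longrightarrow> branch_chain s m k x \<in> Cbar"
  by (induction m arbitrary: k) (auto simp: pedal_branch_Cbar)

lemma compact_Cbar: "compact Cbar"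
proof -
  have "closed Cbar"
    unfolding Cbar_def case_prod_unfold
    by (intro closed_Collect_conj closed_Collect_le closed_Collect_eq continuous_intros)
  moreover have "Cbar = ({0..1} \<times> {0..1} \<times> {0..1}) \<inter> Cbar" by (auto simp: Cbar_def)
  ultimately show ?thesis by (metis compact_Int_closed compact_Times compact_Icc)
qed

lemma convex_Cbar: "convex Cbar"
proof (rule convexI)
  fix x y :: "real \<times> real \<times> real" and u v :: real
  assume xy: "x \<in> Cbar" "y \<in> Cbar" and uv: "0 \<le> u" "0 \<le> v" "u + v = 1"
  obtain a b c a' b' c' where x: "x = (a, b, c)" and y: "y = (a', b', c')"
    by (cases x, cases y)
  have "u * a + v * a' + (u * b + v * b') + (u * c + v * c') = u * (a + b + c) + v * (a' + b' + c')"
    by (simp add: algebra_simps)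
  then show "u *\<^sub>R x + v *\<^sub>R y \<in> Cbar"
    using xy uv by (auto simp: Cbar_def x y intro!: add_mono mult_left_mono)
qed

definition backward_orbit :: "(nat \<Rightarrow> nat) \<Rightarrow> nat \<Rightarrow> real \<times> real \<times> real \<Rightarrow> nat \<Rightarrow> real \<times> real \<times> real" where
  "backward_orbit s n p k = branch_chain s (n - k mod n) (k mod n) p"

lemma backward_orbit_step:
  assumes "n \<ge> 1" "\<And>k. s (k + n) = s k" "branch_chain s n 0 p = p"
  shows "backward_orbit s n p k = pedal_branch (s k) (backward_orbit s n p (Suc k))"
proof -
  have "s k = s (k mod n)" by (rule periodic_mod, rule assms(2))
  moreover have "k mod n < n" using \<open>n \<ge> 1\<close> by simp
  ultimately show ?thesis
  proof (cases "Suc (k mod n) < n")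
    case True
    then have "Suc k mod n = Suc (k mod n)" "n - k mod n = Suc (n - Suc (k mod n))"
      by (simp_all add: mod_Suc)
    with \<open>s k = s (k mod n)\<close> show ?thesis by (simp add: backward_orbit_def)
  next
    case False
    with \<open>k mod n < n\<close> have "Suc k mod n = 0" "n - k mod n = Suc 0" by (simp_all add: mod_Suc)
    with \<open>s k = s (k mod n)\<close> assms(3) show ?thesis by (simp add: backward_orbit_def)
  qed
qed

lemma itinerary_realisable:
  fixes s :: "nat \<Rightarrow> nat"
  assumes n: "n \<ge> 1" and s_less_4: "\<And>k. s k < 4" and s_periodic: "\<And>k. s (k + n) = s k"
    and visits_0_or_3: "s j = 0 \<or> s j = 3"
  obtains p where "p \<in> Ctri" "\<And>k. (pedal ^^ k) p \<in> Cstar" "\<And>k. itinerary p k = s k"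
    "(pedal ^^ n) p = p"
proof -
  have "(1, 0, 0) \<in> Cbar" by simp
  then obtain p where "p \<in> Cbar" and p_fixed: "branch_chain s n 0 p = p"
    using brouwer[OF compact_Cbar convex_Cbar _ continuous_on_branch_chain] branch_chain_Cbar
    by (metis Pi_I empty_iff)
  let ?q = "backward_orbit s n p"
  interpret periodic_backward_orbit n s ?q
  proof
    show "?q (k + n) = ?q k" "?q k \<in> Cbar" for k
      by (simp_all add: backward_orbit_def branch_chain_Cbar \<open>p \<in> Cbar\<close>)
    show "?q k = pedal_branch (s k) (?q (Suc k))" for k
      by (rule backward_orbit_step[OF n s_periodic p_fixed])
  qed (use n s_less_4 visits_0_or_3 in blast)+
  have q0: "?q 0 = p" using p_fixed by (simp add: backward_orbit_def)
  have orbit_q: "(pedal ^^ k) p = ?q k" for k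
    by (induction k) (simp_all add: q0 orbit)
  show ?thesis
  proof
    show "p \<in> Ctri" using orbit[of 0] q0 by (cases p) simp
    show "(pedal ^^ k) p \<in> Cstar" "itinerary p k = s k" for k
      using orbit[of k] by (simp_all add: orbit_q itinerary_def)
    show "(pedal ^^ n) p = p" using orbit_q[of n] q_periodic[of 0] q0 by simp
  qed
qed

section \<open>Two-row words\<close>

text \<open>
  The two constant
  columns encode \<open>R\<^sub>1\<close> and \<open>R\<^sub>2\<close>, so that equal rows correspond to orbits that double the
  smallest angle forever.
\<close>

definition region_bit :: "nat \<Rightarrow> nat \<Rightarrow> nat" where
  "region_bit r i = (if i = 0 then (if r \<ge> 2 then 1 else 0) else (if r = 0 \<or> r = 2 then 1 else 0))"

definition bits_region :: "nat \<Rightarrow> nat \<Rightarrow> nat" where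
  "bits_region x y = (if x = 0 then (if y = 1 then 0 else 1) else (if y = 1 then 2 else 3))"

lemma region_bit_01: "region_bit r i \<in> {0, 1}"
  by (simp add: region_bit_def)

lemma bits_region_less_4: "bits_region x y < 4"
  by (simp add: bits_region_def)

lemma region_bit_bits_region:
  "x \<in> {0, 1} \<Longrightarrow> y \<in> {0, 1} \<Longrightarrow> i < 2 \<Longrightarrow> region_bit (bits_region x y) i = (if i = 0 then x else y)"
  by (auto simp: bits_region_def region_bit_def)

lemma region_bit_inject:
  assumes "r < 4" "r' < 4" "\<forall>i<2. region_bit r i = region_bit r' i"
  shows "r = r'"
proof -
  have "region_bit r 0 = region_bit r' 0" "region_bit r 1 = region_bit r' 1"
    using assms(3) by auto
  moreover have "r \<in> {0, 1, 2, 3}" "r' \<in> {0, 1, 2, 3}" using assms(1,2) by auto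
  ultimately show ?thesis by (auto simp: region_bit_def)
qed

lemma region_bit_constant_column:
  assumes "r < 4" "region_bit r 0 = region_bit r 1"
  shows "r \<in> {1, 2}"
proof -
  have "r \<in> {0, 1, 2, 3}" using assms(1) by auto
  then show ?thesis using assms(2) by (auto simp: region_bit_def)
qed

lemma bits_region_0_3: "x \<noteq> y \<Longrightarrow> x \<in> {0, 1} \<Longrightarrow> y \<in> {0, 1} \<Longrightarrow> bits_region x y \<in> {0, 3}"
  by (auto simp: bits_region_def)

lemma finite_words2: "finite S \<Longrightarrow> finite (words2 m n S)"
proof -
  assume "finite S"
  have "words2 m n S \<subseteq> PiE ({0..<m} \<times> {0..<n}) (\<lambda>_. S)"
    by (auto simp: words2_def PiE_def extensional_def Pi_def)
  moreover have "finite (PiE ({0..<m} \<times> {0..<n}) (\<lambda>_. S))"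
    using \<open>finite S\<close> by (intro finite_PiE) auto
  ultimately show ?thesis by (rule finite_subset)
qed

lemma periodic2_two_rowsD:
  assumes "periodic2 2 n S W"
  shows "(\<forall>j<n. W (0, j) = W (1, j)) \<or>
    (\<exists>b. 1 \<le> b \<and> b < n \<and> b dvd n \<and> (\<forall>i<2. \<forall>j<n. W (i, j) = W (i, j mod b)))"
proof -
  obtain a b p q V where h: "a \<ge> 1" "b \<ge> 1" "p \<ge> 1" "q \<ge> 1" "p \<ge> 2 \<or> q \<ge> 2"
     "p * a = 2" "q * b = n" "V \<in> words2 a b S" "W = power2 V a b p q"
    using assms unfolding periodic2_def by blast
  have "p \<le> 2" using h(1,6) by (metis mult_le_mono2 nat_mult_1_right)
  then have "p = 1 \<or> p = 2" using h(3) by auto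
  then have "p = 2 \<and> a = 1 \<or> p = 1 \<and> a = 2" using h(6) by (elim disjE) simp_all
  then show ?thesis
  proof
    assume "p = 2 \<and> a = 1"
    then show ?thesis using h(7,9) by (simp add: power2_def)
  next
    assume "p = 1 \<and> a = 2"
    then have "q \<ge> 2" using h(5) by simp
    then have "b < n" using h(2,7) mult_le_mono1[of 2 q b] by linarith
    moreover have "\<forall>i<2. \<forall>j<n. W (i, j) = W (i, j mod b)"
    proof (intro allI impI)
      fix i j :: nat
      assume "i < 2" "j < n"
      moreover have "j mod b < n" using \<open>j < n\<close> by (meson le_less_trans mod_less_eq_dividend)
      ultimately show "W (i, j) = W (i, j mod b)"
        using \<open>p = 1 \<and> a = 2\<close> h(7,9) by (simp add: power2_def)
    qed
    moreover have "b dvd n" using h(7) by (metis dvd_triv_right)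
    ultimately show ?thesis using h(2) by blast
  qed
qed

lemma periodic2_if_rows_eq:
  assumes "n \<ge> 1" "W \<in> words2 2 n S" "\<forall>j<n. W (0, j) = W (1, j)"
  shows "periodic2 2 n S W"
proof -
  define V where "V = (\<lambda>(i::nat, j). if i < 1 \<and> j < n then W (0, j) else undefined)"
  have "V \<in> words2 1 n S" using assms(2) by (auto simp: V_def words2_def)
  moreover have "W = power2 V 1 n 2 1"
  proof (rule ext, clarify)
    fix i j :: nat
    show "W (i, j) = power2 V 1 n 2 1 (i, j)"
    proof (cases "i < 2 \<and> j < n")
      case True
      then have "i = 0 \<or> i = 1" by auto
      then show ?thesis using True assms(3) by (auto simp: power2_def V_def)
    qed (use assms(2) in \<open>auto simp: power2_def words2_def\<close>)
  qed
  ultimately show ?thesis unfolding periodic2_def using assms(1)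
    by (intro exI[of _ 1] exI[of _ n] exI[of _ 2] exI[of _ 1] exI[of _ V]) auto
qed

lemma periodic2_if_columns_periodic:
  assumes "W \<in> words2 2 n S" "1 \<le> b" "b < n" "b dvd n"
    and "\<forall>i<2. \<forall>j<n. W (i, j) = W (i, j mod b)"
  shows "periodic2 2 n S W"
proof -
  define V where "V = (\<lambda>(i::nat, j). if i < 2 \<and> j < b then W (i, j) else undefined)"
  have "V \<in> words2 2 b S" using assms(1-3) by (auto simp: V_def words2_def)
  obtain q where q: "n = b * q" using \<open>b dvd n\<close> by blast
  have "q \<ge> 2" using q \<open>b < n\<close> by (cases q) (auto simp: le_Suc_eq)
  have "W = power2 V 2 b 1 q"
  proof (rule ext, clarify)
    fix i j :: nat
    show "W (i, j) = power2 V 2 b 1 q (i, j)"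
    proof (cases "i < 2 \<and> j < n")
      case True
      moreover have "j mod b < b" using \<open>1 \<le> b\<close> by simp
      ultimately show ?thesis using assms(5) q by (auto simp: power2_def V_def mult.commute)
    qed (use assms(1) q in \<open>auto simp: power2_def words2_def mult.commute\<close>)
  qed
  then show ?thesis unfolding periodic2_def using q \<open>q \<ge> 2\<close> \<open>V \<in> words2 2 b S\<close> \<open>1 \<le> b\<close>
    by (intro exI[of _ 2] exI[of _ b] exI[of _ 1] exI[of _ q] exI[of _ V]) (auto simp: mult.commute)
qed

section \<open>Periodic triangles and primitive words\<close>

definition pedal_word :: "nat \<Rightarrow> real \<times> real \<times> real \<Rightarrow> nat \<times> nat \<Rightarrow> nat" where
  "pedal_word n p = (\<lambda>(i, j). if i < 2 \<and> j < n then region_bit (itinerary p j) i else undefined)"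

lemma pedal_word_words2: "pedal_word n p \<in> words2 2 n {0, 1}"
  using region_bit_01 by (auto simp: words2_def pedal_word_def)

lemma itinerary_eq_if_pedal_word_columns_eq:
  assumes "j < n" "j' < n" "\<forall>i<2. pedal_word n p (i, j) = pedal_word n p' (i, j')"
  shows "itinerary p j = itinerary p' j'"
  using assms
  by (intro region_bit_inject) (auto simp: pedal_word_def itinerary_def pedal_region_less_4)

lemma TperD:
  assumes "p \<in> Tper n"
  shows "p \<in> Ctri" "(pedal ^^ n) p = p" "\<And>d. 1 \<le> d \<Longrightarrow> d < n \<Longrightarrow> (pedal ^^ d) p \<noteq> p"
  using assms by (auto simp: Tper_def)

lemma inj_on_pedal_word:
  assumes "n \<ge> 1"
  shows "inj_on (pedal_word n) (Tper n)"
proof (rule inj_onI)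
  fix p p' assume "p \<in> Tper n" "p' \<in> Tper n" "pedal_word n p = pedal_word n p'"
  moreover from \<open>pedal_word n p = pedal_word n p'\<close> have "\<forall>k<n. itinerary p k = itinerary p' k"
    by (auto intro: itinerary_eq_if_pedal_word_columns_eq)
  ultimately show "p = p'" using periodic_points_eqI[OF assms] TperD(2) by blast
qed

lemma pedal_period_if_column_period:
  assumes "n \<ge> 1" "(pedal ^^ n) p = p" "b dvd n"
    and "\<forall>i<2. \<forall>j<n. pedal_word n p (i, j) = pedal_word n p (i, j mod b)"
  shows "(pedal ^^ b) p = p"
proof -
  have "itinerary p j = itinerary p (j mod b)" if "j < n" for j
    using assms(4) that
    by (intro itinerary_eq_if_pedal_word_columns_eq) (auto intro: le_less_trans[OF mod_less_eq_dividend])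
  then have "itinerary ((pedal ^^ b) p) k = itinerary p k" for k
    unfolding itinerary_funpow
    by (rule periodic_divisor[where t = "itinerary p", OF assms(3,1) itinerary_periodic[OF assms(2)]])
  then show ?thesis
    using periodic_points_eqI[OF assms(1)] assms(2) funpow_periodic_point[OF assms(2)] by simp
qed

lemma column_period_if_pedal_period:
  assumes "n \<ge> 1" "(pedal ^^ n) p = p" "1 \<le> d" "d < n" "(pedal ^^ d) p = p"
  shows "periodic2 2 n {0, 1} (pedal_word n p)"
proof -
  let ?g = "gcd d n"
  have "itinerary p (k + ?g) = itinerary p k" for k
    using periodic_gcd itinerary_periodic[OF assms(5)] itinerary_periodic[OF assms(2)] by blast
  then have "itinerary p j = itinerary p (j mod ?g)" for j by (rule periodic_mod)
  moreover have "j mod ?g < n" if "j < n" for j by (meson that le_less_trans mod_less_eq_dividend)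
  ultimately have "\<forall>i<2. \<forall>j<n. pedal_word n p (i, j) = pedal_word n p (i, j mod ?g)"
    by (simp add: pedal_word_def)
  moreover have "1 \<le> ?g" "?g < n" "?g dvd n"
    using assms(3,4) by (simp_all add: Suc_le_eq le_less_trans[OF gcd_le1_nat])
  ultimately show ?thesis by (intro periodic2_if_columns_periodic[OF pedal_word_words2])
qed

lemma pedal_word_not_periodic2:
  assumes "n \<ge> 1" "p \<in> Tper n"
  shows "\<not> periodic2 2 n {0, 1} (pedal_word n p)"
proof
  assume "periodic2 2 n {0, 1} (pedal_word n p)"
  then consider (rows) "\<forall>j<n. pedal_word n p (0, j) = pedal_word n p (1, j)"
    | (columns) b where "1 \<le> b" "b < n" "b dvd n"
        "\<forall>i<2. \<forall>j<n. pedal_word n p (i, j) = pedal_word n p (i, j mod b)"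
    using periodic2_two_rowsD by blast
  then show False
  proof cases
    case rows
    have "itinerary p j \<in> {1, 2}" if "j < n" for j
      using rows that
      by (intro region_bit_constant_column) (auto simp: pedal_word_def itinerary_def pedal_region_less_4)
    then show False
      using no_periodic_orbit_in_regions_1_2[OF assms(1) TperD(1,2)[OF assms(2)]] by blast
  next
    case columns
    then have "(pedal ^^ b) p = p"
      using pedal_period_if_column_period[OF assms(1) TperD(2)[OF assms(2)]] by blast
    then show False using TperD(3)[OF assms(2) columns(1,2)] by blast
  qed
qed

lemma pedal_word_surj:
  assumes n: "n \<ge> 1" and W: "W \<in> words2 2 n {0, 1}" and primitive: "\<not> periodic2 2 n {0, 1} W"
  shows "\<exists>p \<in> Tper n. pedal_word n p = W"
proof -
  have W01: "W (i, j) \<in> {0, 1}" if "i < 2" "j < n" for i j using W that by (auto simp: words2_def)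
  define s where "s k = bits_region (W (0, k mod n)) (W (1, k mod n))" for k
  have s_periodic: "s (k + n) = s k" for k by (simp add: s_def)
  have s_less_4: "s k < 4" for k by (simp add: s_def bits_region_less_4)
  obtain j where "j < n" "W (0, j) \<noteq> W (1, j)"
    using periodic2_if_rows_eq[OF n W] primitive by blast
  then have "s j = 0 \<or> s j = 3" using bits_region_0_3 W01 by (simp add: s_def)
  then obtain p where p: "p \<in> Ctri" "\<And>k. (pedal ^^ k) p \<in> Cstar" "\<And>k. itinerary p k = s k"
      "(pedal ^^ n) p = p"
    using itinerary_realisable[where s = s, OF n s_less_4 s_periodic] by blast
  have word: "pedal_word n p = W"
  proof (rule ext, clarify)
    fix i j
    show "pedal_word n p (i, j) = W (i, j)"
    proof (cases "i < 2 \<and> j < n")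
      case True
      then have "i = 0 \<or> i = 1" by auto
      then show ?thesis using True region_bit_bits_region[OF W01[of 0 j] W01[of 1 j]]
        by (auto simp: pedal_word_def p(3) s_def)
    qed (use W in \<open>auto simp: pedal_word_def words2_def\<close>)
  qed
  then have "(pedal ^^ d) p \<noteq> p" if "1 \<le> d" "d < n" for d
    using column_period_if_pedal_period[OF n p(4) that] primitive by blast
  then have "p \<in> Tper n" using p by (simp add: Tper_def)
  with word show ?thesis by blast
qed

theorem mainTheorem1:
  fixes n :: nat
  assumes "n \<ge> 1"
  shows "finite (Tper n) \<and> psi2 2 n = chi n"
proof -
  let ?P = "{W \<in> words2 2 n {0::nat, 1}. \<not> periodic2 2 n {0, 1} W}"
  have "pedal_word n ` Tper n = ?P"
  proof
    show "pedal_word n ` Tper n \<subseteq> ?P"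
      using pedal_word_words2 pedal_word_not_periodic2[OF assms] by auto
    show "?P \<subseteq> pedal_word n ` Tper n"
      using pedal_word_surj[OF assms] by (auto simp: image_iff)
  qed
  then have bij: "bij_betw (pedal_word n) (Tper n) ?P"
    using inj_on_pedal_word[OF assms] by (simp add: bij_betw_def)
  have "finite ?P" using finite_words2[of "{0::nat, 1}" 2 n] by auto
  then have "finite (Tper n)" using bij_betw_finite[OF bij] by simp
  moreover have "card (Tper n) = card ?P" by (rule bij_betw_same_card[OF bij])
  ultimately show ?thesis by (simp add: psi2_def chi_def)
qed

end
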